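(* Let $\mathbf X=(X_t)_{t\in I}$ be an OPM process with orthogonal polynomial martingales $\{p_n(x;t)\}_{n\ge0}$ and let $\hat p(t)=E p_1^2(X_t;t)$. Suppose $\mathbf X$ is a harness, i.e. for all $s<t<u$ in $I$ there are real numbers $\hat A(s,t,u),\hat B(s,t,u),\hat C(s,t,u)$ with $$E(p_1(X_t;t)\mid\mathcal F_{s,u})=\hat A(s,t,u)p_1(X_s;s)+\hat B(s,t,u)p_1(X_u;u)+\hat C(s,t,u)\quad\text{a.s.}$$ Then for all $s<t<u$, $$\hat A(s,t,u)=\frac{\hat p(u)-\hat p(t)}{\hat p(u)-\hat p(s)},\qquad \hat B(s,t,u)=\frac{\hat p(t)-\hat p(s)}{\hat p(u)-\hat p(s)}.$$
   Context: $I$ is a segment of the real line; $\mathbf X$ is a real Markov process with all moments finite and infinite support of every $X_t$; $\mathcal F_{\le s}=\sigma(X_v:v\in I,v\le s)$ and $\mathcal F_{s,u}=\sigma(X_v:v\in I, v\notin(s,u))$. $\mathbf X$ is an OPM process if it is an MPR process (for every $n$ and $s\le t$, $E(X_t^n\mid\mathcal F_{\le s})$ is a polynomial of degree at most $n$ in $X_s$, with the non-degeneracy and continuity conditions of the MPR class) and there exist polynomials $p_n(x;t)$ of degree $n$ in $x$, $p_0=1$, with $E p_n(X_t;t)p_m(X_t;t)=\hat p_n(t)\delta_{n,m}$ and $E(p_n(X_t;t)\mid\mathcal F_{\le s})=p_n(X_s;s)$ a.s. for all $s\le t$. *)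

theory Defs
  imports "HOL-Probability.Probability" "HOL-Computational_Algebra.Polynomial"
begin

definition gen_alg :: "'a measure \<Rightarrow> (real \<Rightarrow> 'a \<Rightarrow> real) \<Rightarrow> real set \<Rightarrow> 'a measure" where
  "gen_alg M X V = sigma (space M) {X v -` B \<inter> space M | v B. v \<in> V \<and> B \<in> sets borel}"

definition F_le :: "'a measure \<Rightarrow> real set \<Rightarrow> (real \<Rightarrow> 'a \<Rightarrow> real) \<Rightarrow> real \<Rightarrow> 'a measure" where
  "F_le M I X s = gen_alg M X {v \<in> I. v \<le> s}"

definition F_out :: "'a measure \<Rightarrow> real set \<Rightarrow> (real \<Rightarrow> 'a \<Rightarrow> real) \<Rightarrow> real \<Rightarrow> real \<Rightarrow> 'a measure" where
  "F_out M I X s u = gen_alg M X {v \<in> I. v \<notin> {s<..<u}}"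

definition real_process :: "'a measure \<Rightarrow> real set \<Rightarrow> (real \<Rightarrow> 'a \<Rightarrow> real) \<Rightarrow> bool" where
  "real_process M I X \<longleftrightarrow> prob_space M \<and>
     (\<forall>t\<in>I. X t \<in> borel_measurable M \<and> (\<forall>n::nat. integrable M (\<lambda>\<omega>. X t \<omega> ^ n)) \<and>
        \<not> (\<exists>S. finite S \<and> measure M {\<omega> \<in> space M. X t \<omega> \<in> S} = 1))"

definition markov_process :: "'a measure \<Rightarrow> real set \<Rightarrow> (real \<Rightarrow> 'a \<Rightarrow> real) \<Rightarrow> bool" where
  "markov_process M I X \<longleftrightarrow> real_process M I X \<and>
     (\<forall>s\<in>I. \<forall>t\<in>I. s \<le> t \<longrightarrow> (\<forall>B\<in>sets borel.
        AE \<omega> in M. real_cond_exp M (F_le M I X s) (\<lambda>\<omega>. indicator B (X t \<omega>)) \<omega>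
                  = real_cond_exp M (gen_alg M X {s}) (\<lambda>\<omega>. indicator B (X t \<omega>)) \<omega>))"

definition MPR :: "'a measure \<Rightarrow> real set \<Rightarrow> (real \<Rightarrow> 'a \<Rightarrow> real) \<Rightarrow> bool" where
  "MPR M I X \<longleftrightarrow> markov_process M I X \<and>
     (\<forall>n::nat. \<forall>s\<in>I. \<forall>t\<in>I. s \<le> t \<longrightarrow>
        (\<exists>q::real poly. degree q \<le> n \<and>
           (AE \<omega> in M. real_cond_exp M (F_le M I X s) (\<lambda>\<omega>. X t \<omega> ^ n) \<omega> = poly q (X s \<omega>)))) \<and>
     (\<forall>s\<in>I. \<forall>t\<in>I. s < t \<longrightarrow>
        (\<integral>\<omega>. (X t \<omega> - real_cond_exp M (F_le M I X s) (X t) \<omega>)\<^sup>2 \<partial>M) > 0) \<and>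
     (\<forall>n::nat. continuous_on I (\<lambda>t. \<integral>\<omega>. X t \<omega> ^ n \<partial>M))"

definition OPM :: "'a measure \<Rightarrow> real set \<Rightarrow> (real \<Rightarrow> 'a \<Rightarrow> real) \<Rightarrow> (nat \<Rightarrow> real \<Rightarrow> real poly) \<Rightarrow> bool" where
  "OPM M I X p \<longleftrightarrow> MPR M I X \<and>
     (\<forall>t\<in>I. p 0 t = 1 \<and> (\<forall>n. degree (p n t) = n)) \<and>
     (\<exists>phat :: nat \<Rightarrow> real \<Rightarrow> real. \<forall>t\<in>I. \<forall>n m.
        (\<integral>\<omega>. poly (p n t) (X t \<omega>) * poly (p m t) (X t \<omega>) \<partial>M) = (if n = m then phat n t else 0)) \<and>
     (\<forall>n. \<forall>s\<in>I. \<forall>t\<in>I. s \<le> t \<longrightarrow>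
        (AE \<omega> in M. real_cond_exp M (F_le M I X s) (\<lambda>\<omega>. poly (p n t) (X t \<omega>)) \<omega> = poly (p n s) (X s \<omega>)))"

end

theory Submission
  imports Defs
begin

text \<open>Write \<open>q t = p\<^sub>1(X\<^sub>t;t)\<close>. Since \<open>p\<^sub>0 = 1\<close>, orthogonality gives \<open>E q t = 0\<close>, and the
  martingale property gives \<open>E (q s * q t) = phat (min s t)\<close>. Multiplying the harness identity by the
  \<open>F_out s u\<close>-measurable variables \<open>1\<close>, \<open>q s\<close>, \<open>q u\<close> and integrating yields \<open>C = 0\<close>,
  \<open>phat s = (A + B) phat s\<close> and \<open>phat t = A phat s + B phat u\<close>. This system determines \<open>A\<close> and \<open>B\<close>
  because \<open>phat s > 0\<close> (\<open>X\<^sub>s\<close> has infinite support) and \<open>phat\<close> is strictly increasing: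
  \<open>q u - q s\<close> is a non-zero multiple of the innovation \<open>X\<^sub>u - E(X\<^sub>u | F_le s)\<close>, whose second moment
  is positive in the MPR class.\<close>

lemma space_gen_alg [simp]: "space (gen_alg M X V) = space M"
  unfolding gen_alg_def by (rule space_measure_of) auto

lemma sets_gen_alg:
  "sets (gen_alg M X V) = sigma_sets (space M) {X v -` B \<inter> space M | v B. v \<in> V \<and> B \<in> sets borel}"
  unfolding gen_alg_def by (rule sets_measure_of) auto

lemma measurable_gen_alg:
  assumes "v \<in> V"
  shows "X v \<in> borel_measurable (gen_alg M X V)"
proof (rule measurableI)
  fix B :: "real set"
  assume "B \<in> sets borel"
  with assms show "X v -` B \<inter> space (gen_alg M X V) \<in> sets (gen_alg M X V)"
    unfolding sets_gen_alg space_gen_alg by (blast intro: sigma_sets.Basic)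
qed simp

lemma subalgebra_gen_alg:
  assumes "\<And>v. v \<in> V \<Longrightarrow> X v \<in> borel_measurable M"
  shows "subalgebra M (gen_alg M X V)"
  unfolding subalgebra_def sets_gen_alg
  using assms measurable_sets by (auto intro!: sets.sigma_sets_subset)

lemma sigma_finite_subalgebra_gen_alg:
  assumes "finite_measure M" "\<And>v. v \<in> V \<Longrightarrow> X v \<in> borel_measurable M"
  shows "sigma_finite_subalgebra M (gen_alg M X V)"
  using assms subalgebra_gen_alg
  by (intro finite_measure_subalgebra_is_sigma_finite)
     (auto simp: finite_measure_subalgebra_def finite_measure_subalgebra_axioms_def)

lemma borel_measurable_poly:
  fixes f :: "'a \<Rightarrow> real"
  assumes "f \<in> borel_measurable N"
  shows "(\<lambda>x. poly P (f x)) \<in> borel_measurable N"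
  unfolding poly_altdef using assms by measurable

lemma integrable_poly:
  fixes f :: "'a \<Rightarrow> real"
  assumes "\<And>n. integrable M (\<lambda>x. f x ^ n)"
  shows "integrable M (\<lambda>x. poly P (f x))"
  unfolding poly_altdef using assms
  by (auto intro!: Bochner_Integration.integrable_sum integrable_mult_right)

lemma integrable_poly_mult_poly:
  fixes f g :: "'a \<Rightarrow> real"
  assumes "\<And>n. integrable M (\<lambda>x. f x ^ n)" "\<And>n. integrable M (\<lambda>x. g x ^ n)"
  shows "integrable M (\<lambda>x. poly P (f x) * poly Q (g x))"
proof (rule Bochner_Integration.integrable_bound)
  show "integrable M (\<lambda>x. poly (P * P) (f x) + poly (Q * Q) (g x))"
    using assms by (intro Bochner_Integration.integrable_add integrable_poly)
  show "(\<lambda>x. poly P (f x) * poly Q (g x)) \<in> borel_measurable M"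
    using assms integrable_poly[of M f P] integrable_poly[of M g Q] by measurable
  have "\<bar>a * b\<bar> \<le> \<bar>a * a + b * b\<bar>" for a b :: real
  proof -
    have "2 * \<bar>a\<bar> * \<bar>b\<bar> \<le> a * a + b * b"
      using sum_squares_bound[of "\<bar>a\<bar>" "\<bar>b\<bar>"] by (simp add: power2_eq_square)
    moreover have "0 \<le> \<bar>a\<bar> * \<bar>b\<bar>"
      by simp
    ultimately have "\<bar>a\<bar> * \<bar>b\<bar> \<le> a * a + b * b"
      by linarith
    then show ?thesis
      by (simp add: abs_mult abs_of_nonneg sum_squares_ge_zero)
  qed
  then show "AE x in M. norm (poly P (f x) * poly Q (g x))
      \<le> norm (poly (P * P) (f x) + poly (Q * Q) (g x))"
    by (intro AE_I2) (simp only: poly_mult real_norm_def)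
qed

lemma (in sigma_finite_subalgebra) integral_mult_cond_exp_eq:
  assumes "f \<in> borel_measurable F" "g \<in> borel_measurable M" "h \<in> borel_measurable M"
    and "integrable M (\<lambda>x. f x * g x)"
    and "AE x in M. real_cond_exp M F g x = h x"
  shows "(\<integral>x. f x * g x \<partial>M) = (\<integral>x. f x * h x \<partial>M)"
proof -
  have "(\<integral>x. f x * g x \<partial>M) = (\<integral>x. f x * real_cond_exp M F g x \<partial>M)"
    using real_cond_exp_intg(2)[OF assms(4,1,2)] by simp
  also have "\<dots> = (\<integral>x. f x * h x \<partial>M)"
  proof (rule integral_cong_AE)
    have "f \<in> borel_measurable M" "real_cond_exp M F g \<in> borel_measurable M"
      using assms(1) borel_measurable_cond_exp by (auto intro: measurable_from_subalg[OF subalg])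
    with assms(3) show "(\<lambda>x. f x * real_cond_exp M F g x) \<in> borel_measurable M"
        "(\<lambda>x. f x * h x) \<in> borel_measurable M"
      by measurable
    show "AE x in M. f x * real_cond_exp M F g x = f x * h x"
      using assms(5) by eventually_elim simp
  qed
  finally show ?thesis .
qed

lemma poly_degree_one:
  fixes P :: "'a::comm_ring_1 poly"
  assumes "degree P = 1"
  shows "poly P x = coeff P 0 + coeff P 1 * x" "coeff P 1 \<noteq> 0"
proof -
  show "poly P x = coeff P 0 + coeff P 1 * x"
    using assms by (simp add: poly_altdef)
  have "P \<noteq> 0"
    using assms by auto
  then show "coeff P 1 \<noteq> 0"
    using assms leading_coeff_neq_0[of P] by simp
qed

locale opm_process =
  fixes M :: "'a measure" and I :: "real set" and X :: "real \<Rightarrow> 'a \<Rightarrow> real"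
    and p :: "nat \<Rightarrow> real \<Rightarrow> real poly"
  assumes OPM: "OPM M I X p"
begin

lemma MPR: "MPR M I X"
  using OPM by (simp add: OPM_def)

lemma real_process: "real_process M I X"
  using MPR by (simp add: MPR_def markov_process_def)

sublocale prob_space M
  using real_process by (simp add: real_process_def)

lemma borel_measurable_X: "t \<in> I \<Longrightarrow> X t \<in> borel_measurable M"
  and integrable_X_power: "t \<in> I \<Longrightarrow> integrable M (\<lambda>\<omega>. X t \<omega> ^ n)"
  and infinite_support_X: "t \<in> I \<Longrightarrow> finite S \<Longrightarrow> prob {\<omega> \<in> space M. X t \<omega> \<in> S} \<noteq> 1"
  using real_process by (auto simp: real_process_def)

lemma conditional_variance_pos:
  "s \<in> I \<Longrightarrow> t \<in> I \<Longrightarrow> s < t \<Longrightarrow>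
     (\<integral>\<omega>. (X t \<omega> - real_cond_exp M (F_le M I X s) (X t) \<omega>)\<^sup>2 \<partial>M) > 0"
  using MPR by (simp add: MPR_def)

lemma p_zero: "t \<in> I \<Longrightarrow> p 0 t = 1"
  and degree_p: "t \<in> I \<Longrightarrow> degree (p n t) = n"
  using OPM by (auto simp: OPM_def)

lemma integral_p_mult_p_neq:
  "t \<in> I \<Longrightarrow> n \<noteq> m \<Longrightarrow> (\<integral>\<omega>. poly (p n t) (X t \<omega>) * poly (p m t) (X t \<omega>) \<partial>M) = 0"
  using OPM unfolding OPM_def by fastforce

lemma martingale_p:
  "s \<in> I \<Longrightarrow> t \<in> I \<Longrightarrow> s \<le> t \<Longrightarrow>
     AE \<omega> in M. real_cond_exp M (F_le M I X s) (\<lambda>\<omega>. poly (p n t) (X t \<omega>)) \<omega> = poly (p n s) (X s \<omega>)"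
  using OPM by (simp add: OPM_def)

lemma sigma_finite_subalgebra_F_le: "sigma_finite_subalgebra M (F_le M I X s)"
  and sigma_finite_subalgebra_F_out: "sigma_finite_subalgebra M (F_out M I X s u)"
  unfolding F_le_def F_out_def
  by (auto intro!: sigma_finite_subalgebra_gen_alg borel_measurable_X finite_measure_axioms)

definition p1X :: "real \<Rightarrow> 'a \<Rightarrow> real" where
  "p1X t \<omega> = poly (p 1 t) (X t \<omega>)"

definition var1 :: "real \<Rightarrow> real" where
  "var1 t = (\<integral>\<omega>. (p1X t \<omega>)\<^sup>2 \<partial>M)"

lemma integrable_p1X: "t \<in> I \<Longrightarrow> integrable M (p1X t)"
  unfolding p1X_def[abs_def] by (intro integrable_poly integrable_X_power)

lemma integrable_p1X_mult: "s \<in> I \<Longrightarrow> t \<in> I \<Longrightarrow> integrable M (\<lambda>\<omega>. p1X s \<omega> * p1X t \<omega>)"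
  unfolding p1X_def by (intro integrable_poly_mult_poly integrable_X_power)

lemma borel_measurable_p1X: "t \<in> I \<Longrightarrow> p1X t \<in> borel_measurable M"
  using integrable_p1X by blast

lemma p1X_measurable_gen_alg: "t \<in> V \<Longrightarrow> p1X t \<in> borel_measurable (gen_alg M X V)"
  unfolding p1X_def[abs_def] by (intro borel_measurable_poly measurable_gen_alg)

lemma martingale_p1X:
  "s \<in> I \<Longrightarrow> t \<in> I \<Longrightarrow> s \<le> t \<Longrightarrow>
     AE \<omega> in M. real_cond_exp M (F_le M I X s) (p1X t) \<omega> = p1X s \<omega>"
  using martingale_p[of s t 1] by (simp add: p1X_def[abs_def])

lemma p1X_measurable_F_le: "t \<in> I \<Longrightarrow> t \<le> s \<Longrightarrow> p1X t \<in> borel_measurable (F_le M I X s)"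
  unfolding F_le_def by (simp add: p1X_measurable_gen_alg)

lemma p1X_measurable_F_out:
  "t \<in> I \<Longrightarrow> t \<notin> {s<..<u} \<Longrightarrow> p1X t \<in> borel_measurable (F_out M I X s u)"
  unfolding F_out_def by (simp add: p1X_measurable_gen_alg)

lemma var1_eq: "var1 t = (\<integral>\<omega>. p1X t \<omega> * p1X t \<omega> \<partial>M)"
  by (simp add: var1_def power2_eq_square)

lemma integral_p1X: "t \<in> I \<Longrightarrow> (\<integral>\<omega>. p1X t \<omega> \<partial>M) = 0"
  using integral_p_mult_p_neq[of t 1 0] by (simp add: p1X_def p_zero)

lemma integral_p1X_mult_p1X:
  assumes "s \<in> I" "t \<in> I" "s \<le> t"
  shows "(\<integral>\<omega>. p1X s \<omega> * p1X t \<omega> \<partial>M) = var1 s"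
proof -
  interpret F: sigma_finite_subalgebra M "F_le M I X s"
    by (rule sigma_finite_subalgebra_F_le)
  have "(\<integral>\<omega>. p1X s \<omega> * p1X t \<omega> \<partial>M) = (\<integral>\<omega>. p1X s \<omega> * p1X s \<omega> \<partial>M)"
    using assms
    by (intro F.integral_mult_cond_exp_eq p1X_measurable_F_le borel_measurable_p1X
        integrable_p1X_mult martingale_p1X) auto
  then show ?thesis
    by (simp add: var1_eq)
qed

lemma integral_p1X_mult_p1X_min:
  assumes "s \<in> I" "t \<in> I"
  shows "(\<integral>\<omega>. p1X s \<omega> * p1X t \<omega> \<partial>M) = var1 (min s t)"
  using assms integral_p1X_mult_p1X[of s t] integral_p1X_mult_p1X[of t s]
  by (cases "s \<le> t") (auto simp: mult.commute min_def)

lemma var1_pos: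
  assumes "t \<in> I"
  shows "var1 t > 0"
proof (rule ccontr)
  define r where "r = - coeff (p 1 t) 0 / coeff (p 1 t) 1"
  assume "\<not> var1 t > 0"
  moreover have "var1 t \<ge> 0"
    by (simp add: var1_def)
  ultimately have "(\<integral>\<omega>. (p1X t \<omega>)\<^sup>2 \<partial>M) = 0"
    unfolding var1_def by linarith
  moreover have "integrable M (\<lambda>\<omega>. (p1X t \<omega>)\<^sup>2)"
    using integrable_p1X_mult[OF assms assms] by (simp add: power2_eq_square)
  ultimately have "AE \<omega> in M. (p1X t \<omega>)\<^sup>2 = 0"
    by (simp add: integral_nonneg_eq_0_iff_AE)
  then have "AE \<omega> in M. X t \<omega> \<in> {r}"
    by eventually_elim
      (use poly_degree_one[OF degree_p[OF assms, of 1]] in \<open>auto simp: p1X_def r_def field_simps\<close>)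
  then have "prob {\<omega> \<in> space M. X t \<omega> \<in> {r}} = 1"
    using borel_measurable_X[OF assms] by (subst prob_Collect_eq_1) auto
  then show False
    using infinite_support_X[OF assms] by blast
qed

lemma innovation_eq_p1X_increment:
  assumes "s \<in> I" "u \<in> I" "s \<le> u"
  shows "AE \<omega> in M. X u \<omega> - real_cond_exp M (F_le M I X s) (X u) \<omega>
           = (p1X u \<omega> - p1X s \<omega>) / coeff (p 1 u) 1"
proof -
  interpret F: sigma_finite_subalgebra M "F_le M I X s"
    by (rule sigma_finite_subalgebra_F_le)
  define a b where "a = coeff (p 1 u) 1" and "b = coeff (p 1 u) 0"
  have "a \<noteq> 0" and p1X_u: "p1X u = (\<lambda>\<omega>. b + a * X u \<omega>)"
    using poly_degree_one[OF degree_p[OF assms(2), of 1]] by (auto simp: a_def b_def p1X_def)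
  have X_u: "integrable M (X u)"
    using integrable_X_power[OF assms(2), of 1] by simp
  have "AE \<omega> in M. real_cond_exp M (F_le M I X s) (\<lambda>\<omega>. b + a * X u \<omega>) \<omega>
      = real_cond_exp M (F_le M I X s) (\<lambda>\<omega>. b) \<omega> + real_cond_exp M (F_le M I X s) (\<lambda>\<omega>. a * X u \<omega>) \<omega>"
    using X_u by (intro F.real_cond_exp_add) auto
  moreover have "AE \<omega> in M. real_cond_exp M (F_le M I X s) (\<lambda>\<omega>. b) \<omega> = b"
    by (intro F.real_cond_exp_F_meas) auto
  moreover have "AE \<omega> in M. real_cond_exp M (F_le M I X s) (\<lambda>\<omega>. a * X u \<omega>) \<omega>
      = a * real_cond_exp M (F_le M I X s) (X u) \<omega>"
    using X_u by (rule F.real_cond_exp_cmult)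
  moreover have "AE \<omega> in M. real_cond_exp M (F_le M I X s) (p1X u) \<omega> = p1X s \<omega>"
    using assms by (rule martingale_p1X)
  ultimately show ?thesis
    unfolding p1X_u a_def[symmetric] by eventually_elim (use \<open>a \<noteq> 0\<close> in \<open>simp add: field_simps\<close>)
qed

lemma integral_p1X_increment_square:
  assumes "s \<in> I" "u \<in> I" "s \<le> u"
  shows "(\<integral>\<omega>. (p1X u \<omega> - p1X s \<omega>)\<^sup>2 \<partial>M) = var1 u - var1 s"
proof -
  have "(\<integral>\<omega>. (p1X u \<omega> - p1X s \<omega>)\<^sup>2 \<partial>M)
      = (\<integral>\<omega>. p1X u \<omega> * p1X u \<omega> - 2 * (p1X s \<omega> * p1X u \<omega>) + p1X s \<omega> * p1X s \<omega> \<partial>M)"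
    by (simp add: power2_eq_square algebra_simps)
  also have "\<dots> = var1 u - 2 * var1 s + var1 s"
    using assms integral_p1X_mult_p1X[of s u] by (simp add: integrable_p1X_mult var1_eq)
  finally show ?thesis
    by simp
qed

lemma var1_strict_mono:
  assumes "s \<in> I" "u \<in> I" "s < u"
  shows "var1 s < var1 u"
proof -
  interpret F: sigma_finite_subalgebra M "F_le M I X s"
    by (rule sigma_finite_subalgebra_F_le)
  define a where "a = coeff (p 1 u) 1"
  have [measurable]: "X u \<in> borel_measurable M" "p1X s \<in> borel_measurable M" "p1X u \<in> borel_measurable M"
      "real_cond_exp M (F_le M I X s) (X u) \<in> borel_measurable M"
    using assms measurable_from_subalg[OF F.subalg borel_measurable_cond_exp]
    by (auto intro: borel_measurable_X borel_measurable_p1X)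
  have "0 < (\<integral>\<omega>. (X u \<omega> - real_cond_exp M (F_le M I X s) (X u) \<omega>)\<^sup>2 \<partial>M)"
    using assms by (rule conditional_variance_pos)
  also have "\<dots> = (\<integral>\<omega>. ((p1X u \<omega> - p1X s \<omega>) / a)\<^sup>2 \<partial>M)"
    using innovation_eq_p1X_increment[of s u] assms unfolding a_def[symmetric]
    by (intro integral_cong_AE) (auto elim: AE_mp)
  also have "\<dots> = (var1 u - var1 s) / a\<^sup>2"
    using assms integral_p1X_increment_square[of s u] by (simp add: power_divide)
  finally show ?thesis
    by (simp add: zero_less_divide_iff)
qed

lemma integral_mult_harness:
  assumes "s \<in> I" "t \<in> I" "u \<in> I"
    and harness: "AE \<omega> in M. real_cond_exp M (F_out M I X s u) (p1X t) \<omega>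
                    = a * p1X s \<omega> + b * p1X u \<omega> + c"
    and "f \<in> borel_measurable (F_out M I X s u)" "integrable M f"
      "integrable M (\<lambda>\<omega>. f \<omega> * p1X s \<omega>)" "integrable M (\<lambda>\<omega>. f \<omega> * p1X t \<omega>)"
      "integrable M (\<lambda>\<omega>. f \<omega> * p1X u \<omega>)"
  shows "(\<integral>\<omega>. f \<omega> * p1X t \<omega> \<partial>M)
      = a * (\<integral>\<omega>. f \<omega> * p1X s \<omega> \<partial>M) + b * (\<integral>\<omega>. f \<omega> * p1X u \<omega> \<partial>M) + c * (\<integral>\<omega>. f \<omega> \<partial>M)"
proof -
  interpret F: sigma_finite_subalgebra M "F_out M I X s u"
    by (rule sigma_finite_subalgebra_F_out)
  have [measurable]: "p1X s \<in> borel_measurable M" "p1X u \<in> borel_measurable M"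
    using assms by (auto intro: borel_measurable_p1X)
  have "(\<integral>\<omega>. f \<omega> * p1X t \<omega> \<partial>M) = (\<integral>\<omega>. f \<omega> * (a * p1X s \<omega> + b * p1X u \<omega> + c) \<partial>M)"
    using assms by (intro F.integral_mult_cond_exp_eq borel_measurable_p1X) auto
  also have "\<dots> = (\<integral>\<omega>. a * (f \<omega> * p1X s \<omega>) + b * (f \<omega> * p1X u \<omega>) + c * f \<omega> \<partial>M)"
    by (simp add: algebra_simps)
  finally show ?thesis
    using assms by simp
qed

lemma harness_coefficients:
  assumes "s \<in> I" "t \<in> I" "u \<in> I" "s < t" "t < u"
    and harness: "AE \<omega> in M. real_cond_exp M (F_out M I X s u) (p1X t) \<omega>
                    = a * p1X s \<omega> + b * p1X u \<omega> + c"
  shows "a = (var1 u - var1 t) / (var1 u - var1 s)" "b = (var1 t - var1 s) / (var1 u - var1 s)"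
proof -
  have "(\<integral>\<omega>. 1 * p1X t \<omega> \<partial>M)
      = a * (\<integral>\<omega>. 1 * p1X s \<omega> \<partial>M) + b * (\<integral>\<omega>. 1 * p1X u \<omega> \<partial>M) + c * (\<integral>\<omega>. 1 \<partial>M)"
    using assms by (intro integral_mult_harness[OF _ _ _ harness]) (auto intro: integrable_p1X)
  then have "c = 0"
    using assms by (simp add: integral_p1X prob_space)
  have "(\<integral>\<omega>. p1X s \<omega> * p1X t \<omega> \<partial>M)
      = a * (\<integral>\<omega>. p1X s \<omega> * p1X s \<omega> \<partial>M) + b * (\<integral>\<omega>. p1X s \<omega> * p1X u \<omega> \<partial>M) + c * (\<integral>\<omega>. p1X s \<omega> \<partial>M)"
    using assms
    by (intro integral_mult_harness[OF _ _ _ harness] p1X_measurable_F_out integrable_p1X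
        integrable_p1X_mult) auto
  then have "var1 s = a * var1 s + b * var1 s"
    using integral_p1X_mult_p1X_min[of s s] integral_p1X_mult_p1X_min[of s t]
      integral_p1X_mult_p1X_min[of s u] assms \<open>c = 0\<close>
    by simp
  then have "var1 s * (a + b - 1) = 0"
    by (simp add: algebra_simps)
  then have "a = 1 - b"
    using var1_pos[OF \<open>s \<in> I\<close>] by simp
  have "(\<integral>\<omega>. p1X u \<omega> * p1X t \<omega> \<partial>M)
      = a * (\<integral>\<omega>. p1X u \<omega> * p1X s \<omega> \<partial>M) + b * (\<integral>\<omega>. p1X u \<omega> * p1X u \<omega> \<partial>M) + c * (\<integral>\<omega>. p1X u \<omega> \<partial>M)"
    using assms
    by (intro integral_mult_harness[OF _ _ _ harness] p1X_measurable_F_out integrable_p1X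
        integrable_p1X_mult) auto
  then have "var1 t = a * var1 s + b * var1 u"
    using integral_p1X_mult_p1X_min[of u t] integral_p1X_mult_p1X_min[of u s]
      integral_p1X_mult_p1X_min[of u u] assms \<open>c = 0\<close>
    by simp
  moreover have "var1 u - var1 s > 0"
    using var1_strict_mono[of s u] assms by simp
  ultimately show "a = (var1 u - var1 t) / (var1 u - var1 s)" "b = (var1 t - var1 s) / (var1 u - var1 s)"
    unfolding \<open>a = 1 - b\<close> by (simp_all add: field_simps)
qed

end

theorem lemma1:
  fixes M :: "'a measure" and I :: "real set" and X :: "real \<Rightarrow> 'a \<Rightarrow> real"
    and p :: "nat \<Rightarrow> real \<Rightarrow> real poly"
    and A B C :: "real \<Rightarrow> real \<Rightarrow> real \<Rightarrow> real"
    and phat :: "real \<Rightarrow> real"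
  assumes "is_interval I"
    and "OPM M I X p"
    and phat_def: "\<And>t. phat t = (\<integral>\<omega>. (poly (p 1 t) (X t \<omega>))\<^sup>2 \<partial>M)"
    and harness: "\<And>s t u. s \<in> I \<Longrightarrow> t \<in> I \<Longrightarrow> u \<in> I \<Longrightarrow> s < t \<Longrightarrow> t < u \<Longrightarrow>
        AE \<omega> in M. real_cond_exp M (F_out M I X s u) (\<lambda>\<omega>. poly (p 1 t) (X t \<omega>)) \<omega>
          = A s t u * poly (p 1 s) (X s \<omega>) + B s t u * poly (p 1 u) (X u \<omega>) + C s t u"
  shows "\<forall>s\<in>I. \<forall>t\<in>I. \<forall>u\<in>I. s < t \<and> t < u \<longrightarrow>
           A s t u = (phat u - phat t) / (phat u - phat s) \<and>
           B s t u = (phat t - phat s) / (phat u - phat s)"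
proof (intro ballI impI)
  interpret opm_process M I X p
    using assms(2) by (rule opm_process.intro)
  have "phat = var1"
    by (simp add: fun_eq_iff phat_def var1_def p1X_def)
  fix s t u
  assume "s \<in> I" "t \<in> I" "u \<in> I" "s < t \<and> t < u"
  with harness[of s t u] show "A s t u = (phat u - phat t) / (phat u - phat s) \<and>
      B s t u = (phat t - phat s) / (phat u - phat s)"
    unfolding \<open>phat = var1\<close> by (simp add: harness_coefficients p1X_def[abs_def])
qed

end
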